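(* The type ${\mathbf{R}_\mathbf{E}}$ of Euclidean reals is Cauchy complete: every Cauchy approximation in ${\mathbf{R}_\mathbf{E}}$ has a limit in ${\mathbf{R}_\mathbf{E}}$.
   Context: Work in univalent type theory with propositional truncation, function extensionality and propositional resizing; $\Omega$ is the type of propositions, $\exists$ and $\vee$ are truncated; a subtype of $A$ is a map $A\to\Omega$, identified with $\sum_{a:A}P(a)$. $\mathbf{Q}$ is the rationals, $\mathbf{Q}_+$ the positive rationals. For predicates $L,U:\mathbf{Q}\to\Omega$ and $x=(L,U)$ write $q<x$ for $L(q)$ and $x<r$ for $U(r)$. $x$ is a Dedekind cut if: (inhabited) $\exists q.\,q<x$ and $\exists r.\,x<r$; (rounded) $q<x\Leftrightarrow\exists q'.(q<q')\wedge(q'<x)$ and $x<r\Leftrightarrow\exists r'.(r'<r)\wedge(x<r')$; (transitive) $(q<x)\wedge(x<r)\Rightarrow q<r$; (located) $q<r\Rightarrow(q<x)\vee(x<r)$. ${\mathbf{R}_\mathbf{D}}$ is the type of Dedekind cuts, with $\mathsf{rat}(q)$ the cut with $r<\mathsf{rat}(q)\Leftrightarrow r<q$ and $\mathsf{rat}(q)<r\Leftrightarrow q<r$. Define $q<x+y:=\exists s,t.(q=s+t)\wedge(s<x)\wedge(t<y)$, $x+y<r:=\exists s,t.(r=s+t)\wedge(x<s)\wedge(y<t)$; $q<-x:=x<-q$, $-x<r:=-r<x$; $x-y:=x+(-y)$; $q<|x|:=(q<x)\vee(q<-x)$, $|x|<r:=(x<r)\wedge(-x<r)$; premetric $x\sim_\varepsilon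 y:=|x-y|<\varepsilon$ ($\varepsilon$ in the upper cut of $|x-y|$). For a premetric space $R$ (a type with $\sim:\mathbf{Q}_+\times R\times R\to\Omega$), a Cauchy approximation is $x:\mathbf{Q}_+\to R$ with $\forall\delta,\varepsilon.\,x_\delta\sim_{\delta+\varepsilon}x_\varepsilon$; $u:R$ is a limit of $x$ if $\forall\varepsilon,\theta:\mathbf{Q}_+.\,x_\varepsilon\sim_{\varepsilon+\theta}u$; $R$ is Cauchy complete if every Cauchy approximation has a limit. A subtype $S$ of ${\mathbf{R}_\mathbf{D}}$ carries the restricted premetric (elements are $\varepsilon$-close in $S$ iff they are in ${\mathbf{R}_\mathbf{D}}$). The Euclidean reals ${\mathbf{R}_\mathbf{E}}$ is the smallest subtype of ${\mathbf{R}_\mathbf{D}}$ containing $\mathsf{rat}(q)$ for all $q:\mathbf{Q}$ and Cauchy complete with respect to the restricted premetric; concretely, $u\in{\mathbf{R}_\mathbf{E}}$ iff $u\in S$ for every such subtype $S$. *)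

theory Defs
  imports Complex_Main
begin

text \<open>A pair (L, U) of predicates on the rationals; q < x means L q, x < r means U r.\<close>
type_synonym cut = "(rat \<Rightarrow> bool) \<times> (rat \<Rightarrow> bool)"

definition lower :: "cut \<Rightarrow> rat \<Rightarrow> bool" where "lower x q = fst x q"
definition upper :: "cut \<Rightarrow> rat \<Rightarrow> bool" where "upper x r = snd x r"

definition is_dedekind_cut :: "cut \<Rightarrow> bool" where
  "is_dedekind_cut x \<longleftrightarrow>
     (\<exists>q. lower x q) \<and> (\<exists>r. upper x r) \<and>
     (\<forall>q. lower x q \<longleftrightarrow> (\<exists>q'. q < q' \<and> lower x q')) \<and>
     (\<forall>r. upper x r \<longleftrightarrow> (\<exists>r'. r' < r \<and> upper x r')) \<and>
     (\<forall>q r. lower x q \<and> upper x r \<longrightarrow> q < r) \<and>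
     (\<forall>q r. q < r \<longrightarrow> lower x q \<or> upper x r)"

definition RD :: "cut set" where "RD = {x. is_dedekind_cut x}"

definition rat_cut :: "rat \<Rightarrow> cut" where
  "rat_cut q = ((\<lambda>r. r < q), (\<lambda>r. q < r))"

definition cut_add :: "cut \<Rightarrow> cut \<Rightarrow> cut" where
  "cut_add x y =
     ((\<lambda>q. \<exists>s t. q = s + t \<and> lower x s \<and> lower y t),
      (\<lambda>r. \<exists>s t. r = s + t \<and> upper x s \<and> upper y t))"

definition cut_neg :: "cut \<Rightarrow> cut" where
  "cut_neg x = ((\<lambda>q. upper x (- q)), (\<lambda>r. lower x (- r)))"

definition cut_sub :: "cut \<Rightarrow> cut \<Rightarrow> cut" where
  "cut_sub x y = cut_add x (cut_neg y)"

definition cut_abs :: "cut \<Rightarrow> cut" where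
  "cut_abs x = ((\<lambda>q. lower x q \<or> lower (cut_neg x) q),
                (\<lambda>r. upper x r \<and> upper (cut_neg x) r))"

definition close :: "rat \<Rightarrow> cut \<Rightarrow> cut \<Rightarrow> bool" where
  "close \<epsilon> x y \<longleftrightarrow> upper (cut_abs (cut_sub x y)) \<epsilon>"

text \<open>Cauchy approximation in a subtype S of RD: a map from the positive rationals
  (represented as a function on rat, only its values at positive arguments matter) into S.\<close>
definition cauchy_approx_in :: "cut set \<Rightarrow> (rat \<Rightarrow> cut) \<Rightarrow> bool" where
  "cauchy_approx_in S x \<longleftrightarrow>
     (\<forall>\<epsilon>>0. x \<epsilon> \<in> S) \<and>
     (\<forall>\<delta>>0. \<forall>\<epsilon>>0. close (\<delta> + \<epsilon>) (x \<delta>) (x \<epsilon>))"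

definition is_limit :: "(rat \<Rightarrow> cut) \<Rightarrow> cut \<Rightarrow> bool" where
  "is_limit x u \<longleftrightarrow> (\<forall>\<epsilon>>0. \<forall>\<theta>>0. close (\<epsilon> + \<theta>) (x \<epsilon>) u)"

definition cauchy_complete :: "cut set \<Rightarrow> bool" where
  "cauchy_complete S \<longleftrightarrow> (\<forall>x. cauchy_approx_in S x \<longrightarrow> (\<exists>u\<in>S. is_limit x u))"

definition RE :: "cut set" where
  "RE = {u. \<forall>S. S \<subseteq> RD \<and> (\<forall>q. rat_cut q \<in> S) \<and> cauchy_complete S \<longrightarrow> u \<in> S}"

end

theory Submission
  imports Defs
begin

text \<open>The Dedekind reals are Cauchy complete: the limit of a Cauchy approximation x is the cut
  whose lower (upper) points are those q with q + \<epsilon> + t below (r - \<epsilon> - t above) some x \<epsilon>.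
  Limits of Dedekind cuts are unique, since two cuts that are \<epsilon>-close for every \<epsilon> coincide.
  Now let x be a Cauchy approximation in RE. For every admissible S (rationals, completeness)
  x is an approximation in S, so it has a limit in S \<subseteq> RD, which must be the limit in RD.
  Hence that limit lies in every such S, i.e. in RE.\<close>

lemma dedekind_lower_mono: "is_dedekind_cut x \<Longrightarrow> lower x q \<Longrightarrow> p \<le> q \<Longrightarrow> lower x p"
  unfolding is_dedekind_cut_def by (metis order_le_imp_less_or_eq)

lemma dedekind_upper_mono: "is_dedekind_cut x \<Longrightarrow> upper x r \<Longrightarrow> r \<le> s \<Longrightarrow> upper x s"
  unfolding is_dedekind_cut_def by (metis order_le_imp_less_or_eq)

lemma dedekind_lower_less_upper: "is_dedekind_cut x \<Longrightarrow> lower x q \<Longrightarrow> upper x r \<Longrightarrow> q < r"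
  unfolding is_dedekind_cut_def by blast

lemma dedekind_located: "is_dedekind_cut x \<Longrightarrow> q < r \<Longrightarrow> lower x q \<or> upper x r"
  unfolding is_dedekind_cut_def by blast

lemma rat_cut_in_RD: "rat_cut q \<in> RD"
  unfolding RD_def rat_cut_def is_dedekind_cut_def lower_def upper_def
proof (intro CollectI conjI allI impI iffI)
  show "\<exists>r. fst ((\<lambda>r. r < q), (\<lambda>r. q < r)) r" by (rule exI[of _ "q - 1"]) simp
  show "\<exists>r. snd ((\<lambda>r. r < q), (\<lambda>r. q < r)) r" by (rule exI[of _ "q + 1"]) simp
qed (auto dest: dense)

lemma close_iff_sums:
  "close a x y \<longleftrightarrow> (\<exists>s t. a = s + t \<and> upper x s \<and> lower y (- t)) \<and>
                    (\<exists>s t. - a = s + t \<and> lower x s \<and> upper y (- t))"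
  unfolding close_def cut_abs_def cut_sub_def cut_add_def cut_neg_def upper_def lower_def by simp

text \<open>Rational bounds witnessing x - y < a and y - x < a, free of cut arithmetic.\<close>
definition close_witness :: "rat \<Rightarrow> cut \<Rightarrow> cut \<Rightarrow> bool" where
  "close_witness a x y \<longleftrightarrow> (\<exists>s p. upper x s \<and> lower y p \<and> s - p \<le> a) \<and>
                           (\<exists>s p. lower x s \<and> upper y p \<and> p - s \<le> a)"

lemma close_imp_close_witness:
  assumes "close a x y"
  shows "close_witness a x y"
proof -
  obtain s t s' t' where "a = s + t" "upper x s" "lower y (- t)"
    and "- a = s' + t'" "lower x s'" "upper y (- t')"
    using assms unfolding close_iff_sums by blast
  then have "upper x s \<and> lower y (- t) \<and> s - - t \<le> a" "lower x s' \<and> upper y (- t') \<and> - t' - s' \<le> a"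
    by simp_all
  then show ?thesis unfolding close_witness_def by blast
qed

lemma close_witness_imp_close:
  assumes x: "is_dedekind_cut x" and "close_witness a x y"
  shows "close a x y"
proof -
  obtain s p where "upper x s" "lower y p" "s - p \<le> a"
    using assms(2) unfolding close_witness_def by blast
  then have "a = (a + p) + - p \<and> upper x (a + p) \<and> lower y (- (- p))"
    using dedekind_upper_mono[OF x] by simp
  moreover obtain s' p' where "lower x s'" "upper y p'" "p' - s' \<le> a"
    using assms(2) unfolding close_witness_def by blast
  then have "- a = (p' - a) + - p' \<and> lower x (p' - a) \<and> upper y (- (- p'))"
    using dedekind_lower_mono[OF x] by simp
  ultimately show ?thesis unfolding close_iff_sums by blast
qed

lemma close_witness_sym: "close_witness a x y \<Longrightarrow> close_witness a y x"
  unfolding close_witness_def by blast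

lemma close_witness_triangle:
  assumes y: "is_dedekind_cut y" and "close_witness a y u" and "close_witness b y v"
  shows "close_witness (a + b) u v"
proof -
  from assms(2) obtain s1 p1 s2 p2 where A: "upper y s1" "lower u p1" "s1 - p1 \<le> a"
    and B: "lower y s2" "upper u p2" "p2 - s2 \<le> a" unfolding close_witness_def by blast
  from assms(3) obtain s3 p3 s4 p4 where C: "upper y s3" "lower v p3" "s3 - p3 \<le> b"
    and D: "lower y s4" "upper v p4" "p4 - s4 \<le> b" unfolding close_witness_def by blast
  have "s2 < s3" "s4 < s1"
    using dedekind_lower_less_upper[OF y] B(1) C(1) D(1) A(1) by auto
  then have "p2 - p3 \<le> a + b" "p4 - p1 \<le> a + b" using A(3) B(3) C(3) D(3) by linarith+
  then show ?thesis unfolding close_witness_def using A B C D by blast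
qed

lemma lower_if_close_witness_all:
  assumes x: "is_dedekind_cut x" and y: "is_dedekind_cut y"
    and close: "\<forall>e>0. close_witness e x y" and "lower x q"
  shows "lower y q"
proof -
  obtain q' where "q < q'" "lower x q'" using x \<open>lower x q\<close> unfolding is_dedekind_cut_def by blast
  moreover obtain s p where "upper x s" "lower y p" "s - p \<le> (q' - q) / 2"
    using close \<open>q < q'\<close> unfolding close_witness_def by (meson half_gt_zero diff_gt_0_iff_gt)
  ultimately have "q' < s" "s - p \<le> (q' - q) / 2" using dedekind_lower_less_upper[OF x] by blast+
  then have "q < p" using \<open>q < q'\<close> by (simp add: field_simps)
  then show ?thesis using dedekind_lower_mono[OF y \<open>lower y p\<close>] by simp
qed

lemma upper_if_close_witness_all:
  assumes x: "is_dedekind_cut x" and y: "is_dedekind_cut y"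
    and close: "\<forall>e>0. close_witness e x y" and "upper x r"
  shows "upper y r"
proof -
  obtain r' where "r' < r" "upper x r'" using x \<open>upper x r\<close> unfolding is_dedekind_cut_def by blast
  moreover obtain s p where "lower x s" "upper y p" "p - s \<le> (r - r') / 2"
    using close \<open>r' < r\<close> unfolding close_witness_def by (meson half_gt_zero diff_gt_0_iff_gt)
  ultimately have "s < r'" "p - s \<le> (r - r') / 2" using dedekind_lower_less_upper[OF x] by blast+
  then have "p < r" using \<open>r' < r\<close> by (simp add: field_simps)
  then show ?thesis using dedekind_upper_mono[OF y \<open>upper y p\<close>] by simp
qed

lemma eq_if_close_witness_all:
  assumes x: "is_dedekind_cut x" and y: "is_dedekind_cut y" and "\<forall>e>0. close_witness e x y"
  shows "x = y"
proof -
  have "\<forall>e>0. close_witness e y x" using assms(3) close_witness_sym by blast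
  then have "lower x = lower y" "upper x = upper y"
    using lower_if_close_witness_all upper_if_close_witness_all x y assms(3) by blast+
  then show ?thesis unfolding lower_def upper_def by (simp add: fun_eq_iff prod_eq_iff)
qed

lemma dedekind_limit_unique:
  assumes "\<forall>e>0. is_dedekind_cut (x e)" "is_dedekind_cut u" "is_dedekind_cut v"
    "is_limit x u" "is_limit x v"
  shows "u = v"
proof (rule eq_if_close_witness_all[OF assms(2,3)], intro allI impI)
  fix e :: rat assume "e > 0"
  define d where "d = e / 4"
  have "d > 0" using \<open>e > 0\<close> by (simp add: d_def)
  then have "close_witness (d + d) (x d) u" "close_witness (d + d) (x d) v"
    using assms(4,5) close_imp_close_witness unfolding is_limit_def by blast+
  then have "close_witness (d + d + (d + d)) u v"
    using close_witness_triangle assms(1) \<open>d > 0\<close> by blast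
  then show "close_witness e u v" by (simp add: d_def)
qed

definition cut_lim :: "(rat \<Rightarrow> cut) \<Rightarrow> cut" where
  "cut_lim x = ((\<lambda>q. \<exists>t>0. \<exists>e>0. lower (x e) (q + t + e)),
                (\<lambda>r. \<exists>t>0. \<exists>e>0. upper (x e) (r - t - e)))"

lemma lower_cut_lim: "lower (cut_lim x) q \<longleftrightarrow> (\<exists>t>0. \<exists>e>0. lower (x e) (q + t + e))"
  unfolding cut_lim_def lower_def by simp

lemma upper_cut_lim: "upper (cut_lim x) r \<longleftrightarrow> (\<exists>t>0. \<exists>e>0. upper (x e) (r - t - e))"
  unfolding cut_lim_def upper_def by simp

lemma ex_pos_add_rounded:
  fixes q :: "'a::linordered_field"
  shows "(\<exists>t>0. P (q + t)) \<longleftrightarrow> (\<exists>q'. q < q' \<and> (\<exists>t>0. P (q' + t)))"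
proof
  assume "\<exists>t>0. P (q + t)"
  then obtain t where "t > 0" "P (q + t)" by blast
  moreover have "q + t = (q + t/2) + t/2" by simp
  ultimately show "\<exists>q'. q < q' \<and> (\<exists>t>0. P (q' + t))"
    by (metis half_gt_zero less_add_same_cancel1)
next
  assume "\<exists>q'. q < q' \<and> (\<exists>t>0. P (q' + t))"
  then obtain q' t where "q < q'" "t > 0" "P (q' + t)" by blast
  moreover have "q' + t = q + (q' - q + t)" by simp
  ultimately show "\<exists>t>0. P (q + t)" by (metis add_pos_pos diff_gt_0_iff_gt)
qed

lemma ex_pos_diff_rounded:
  fixes r :: "'a::linordered_field"
  shows "(\<exists>t>0. P (r - t)) \<longleftrightarrow> (\<exists>r'. r' < r \<and> (\<exists>t>0. P (r' - t)))"
  using ex_pos_add_rounded[of "\<lambda>s. P (- s)" "- r"]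
  by (simp add: minus_less_iff) (metis minus_minus neg_less_iff_less)

lemma dedekind_cut_lim:
  assumes D: "\<And>e. e > 0 \<Longrightarrow> is_dedekind_cut (x e)"
    and C: "\<And>d e. d > 0 \<Longrightarrow> e > 0 \<Longrightarrow> close_witness (d + e) (x d) (x e)"
  shows "is_dedekind_cut (cut_lim x)"
  unfolding is_dedekind_cut_def
proof (intro conjI allI impI)
  obtain q r where "lower (x 1) q" "upper (x 1) r" using D[of 1] unfolding is_dedekind_cut_def by (meson zero_less_one)
  then have "lower (cut_lim x) (q - 2)" "upper (cut_lim x) (r + 2)"
    unfolding lower_cut_lim upper_cut_lim by (auto intro!: exI[of _ 1])
  then show "\<exists>q. lower (cut_lim x) q" "\<exists>r. upper (cut_lim x) r" by blast+
next
  fix q r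
  show "lower (cut_lim x) q \<longleftrightarrow> (\<exists>q'. q < q' \<and> lower (cut_lim x) q')"
    unfolding lower_cut_lim by (rule ex_pos_add_rounded[of "\<lambda>c. \<exists>e>0. lower (x e) (c + e)"])
  show "upper (cut_lim x) r \<longleftrightarrow> (\<exists>r'. r' < r \<and> upper (cut_lim x) r')"
    unfolding upper_cut_lim by (rule ex_pos_diff_rounded[of "\<lambda>c. \<exists>e>0. upper (x e) (c - e)"])
next
  fix q r
  assume "lower (cut_lim x) q \<and> upper (cut_lim x) r"
  then obtain t e h d where "t > 0" "e > 0" "lower (x e) (q + t + e)"
    and "h > 0" "d > 0" "upper (x d) (r - h - d)" unfolding lower_cut_lim upper_cut_lim by blast
  moreover obtain s p where "upper (x e) s" "lower (x d) p" "s - p \<le> e + d"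
    using C[of e d] \<open>e > 0\<close> \<open>d > 0\<close> unfolding close_witness_def by blast
  ultimately have "q + t + e < s" "p < r - h - d"
    using dedekind_lower_less_upper[OF D[of e]] dedekind_lower_less_upper[OF D[of d]] by blast+
  then show "q < r" using \<open>s - p \<le> e + d\<close> \<open>t > 0\<close> \<open>h > 0\<close> by simp
next
  fix q r :: rat
  assume "q < r"
  define e where "e = (r - q) / 5"
  have "e > 0" "q + e + e < r - e - e" using \<open>q < r\<close> by (simp_all add: e_def field_simps)
  then show "lower (cut_lim x) q \<or> upper (cut_lim x) r"
    unfolding lower_cut_lim upper_cut_lim using dedekind_located[OF D[of e]] by blast
qed

lemma is_limit_cut_lim:
  assumes D: "\<And>e. e > 0 \<Longrightarrow> is_dedekind_cut (x e)"
    and C: "\<And>d e. d > 0 \<Longrightarrow> e > 0 \<Longrightarrow> close_witness (d + e) (x d) (x e)"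
  shows "is_limit x (cut_lim x)"
  unfolding is_limit_def
proof (intro allI impI)
  fix e \<theta> :: rat
  assume "e > 0" "\<theta> > 0"
  define d where "d = \<theta> / 4"
  have "d > 0" using \<open>\<theta> > 0\<close> by (simp add: d_def)
  obtain s1 p1 s2 p2 where "upper (x e) s1" "lower (x d) p1" "s1 - p1 \<le> e + d"
    and "lower (x e) s2" "upper (x d) p2" "p2 - s2 \<le> e + d"
    using C[OF \<open>e > 0\<close> \<open>d > 0\<close>] unfolding close_witness_def by blast
  moreover have "lower (cut_lim x) (p1 - d - d)" "upper (cut_lim x) (p2 + d + d)"
    unfolding lower_cut_lim upper_cut_lim using \<open>d > 0\<close> \<open>lower (x d) p1\<close> \<open>upper (x d) p2\<close> by force+
  moreover have "s1 - (p1 - d - d) \<le> e + \<theta>" "(p2 + d + d) - s2 \<le> e + \<theta>"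
    using \<open>s1 - p1 \<le> e + d\<close> \<open>p2 - s2 \<le> e + d\<close> \<open>\<theta> > 0\<close> by (simp_all add: d_def)
  ultimately have "close_witness (e + \<theta>) (x e) (cut_lim x)"
    unfolding close_witness_def by blast
  then show "close (e + \<theta>) (x e) (cut_lim x)"
    using close_witness_imp_close D \<open>e > 0\<close> by blast
qed

lemma cauchy_approx_in_RD_cut_lim:
  assumes "cauchy_approx_in RD x"
  shows "cut_lim x \<in> RD" "is_limit x (cut_lim x)"
  using assms dedekind_cut_lim[of x] is_limit_cut_lim[of x] close_imp_close_witness
  unfolding cauchy_approx_in_def RD_def by blast+

lemma cauchy_complete_RD: "cauchy_complete RD"
  unfolding cauchy_complete_def using cauchy_approx_in_RD_cut_lim by blast

lemma RE_subset_RD: "RE \<subseteq> RD"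
  unfolding RE_def using cauchy_complete_RD rat_cut_in_RD by blast

lemma cauchy_approx_in_mono: "cauchy_approx_in S x \<Longrightarrow> S \<subseteq> T \<Longrightarrow> cauchy_approx_in T x"
  unfolding cauchy_approx_in_def by blast

theorem lemma2p27:
  shows "cauchy_complete RE"
  unfolding cauchy_complete_def
proof (intro allI impI)
  fix x
  assume x: "cauchy_approx_in RE x"
  then have xD: "cauchy_approx_in RD x" using cauchy_approx_in_mono RE_subset_RD by blast
  have "cut_lim x \<in> S" if S: "S \<subseteq> RD" "\<forall>q. rat_cut q \<in> S" "cauchy_complete S" for S
  proof -
    have "cauchy_approx_in S x" using x S unfolding cauchy_approx_in_def RE_def by blast
    then obtain v where "v \<in> S" "is_limit x v" using S(3) unfolding cauchy_complete_def by blast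
    moreover have "v = cut_lim x"
      using dedekind_limit_unique \<open>v \<in> S\<close> \<open>is_limit x v\<close> cauchy_approx_in_RD_cut_lim[OF xD] S(1) xD
      unfolding cauchy_approx_in_def RD_def by blast
    ultimately show ?thesis by simp
  qed
  then show "\<exists>u\<in>RE. is_limit x u"
    using cauchy_approx_in_RD_cut_lim(2)[OF xD] unfolding RE_def by blast
qed

end
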